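(* Let $r\ge 2$ and let $GT(r)$ be the glued binary tree of depth $r$, built from the two copies $T_r^{(1)}$ and $T_r^{(2)}$ of the perfect binary tree of depth $r$. For each $i\in\{1,2\}$, the subgraph of $GT(r)$ induced by $V(T_r^{(i)})$ is an isometric subgraph of $GT(r)$. Moreover, if $u,v\in V(T_r^{(i)})$, then in $GT(r)$ there are exactly two shortest $u,v$-paths if $u$ and $v$ are both quasi-leaves, and otherwise the shortest $u,v$-path is unique.
   Context: A perfect binary tree of depth $r\ge1$ is a rooted tree in which every non-leaf vertex has exactly $2$ children and all leaves have depth $r$. The glued binary tree $GT(r)$ is obtained from two copies $T_r^{(1)}$ and $T_r^{(2)}$ of the perfect binary tree of depth $r$ by pairwise identifying their leaves, where each leaf of $T_r^{(1)}$ is identified with its image in $T_r^{(2)}$ under a fixed isomorphism of the two copies. The identified vertices are the quasi-leaves of $GT(r)$; thus the set of quasi-leaves is $V(T_r^{(1)})\cap V(T_r^{(2)})$. A subgraph $H$ of $G$ is isometric if $d_H(u,v)=d_G(u,v)$ for all $u,v\in V(H)$. *)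

theory Defs
  imports Main "HOL-Library.Extended_Nat"
begin

definition adj :: "('v \<times> 'v) set \<Rightarrow> 'v \<Rightarrow> 'v \<Rightarrow> bool" where
  "adj E x y \<longleftrightarrow> (x, y) \<in> E \<or> (y, x) \<in> E"

definition walk :: "'v set \<Rightarrow> ('v \<times> 'v) set \<Rightarrow> 'v list \<Rightarrow> bool" where
  "walk V E xs \<longleftrightarrow> xs \<noteq> [] \<and> set xs \<subseteq> V \<and>
     (\<forall>i. Suc i < length xs \<longrightarrow> adj E (xs ! i) (xs ! Suc i))"

definition gpath :: "'v set \<Rightarrow> ('v \<times> 'v) set \<Rightarrow> 'v list \<Rightarrow> bool" where
  "gpath V E xs \<longleftrightarrow> walk V E xs \<and> distinct xs"

text \<open>Distance (infinite if no walk exists); the length of a walk is its number of edges.\<close>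
definition gdist :: "'v set \<Rightarrow> ('v \<times> 'v) set \<Rightarrow> 'v \<Rightarrow> 'v \<Rightarrow> enat" where
  "gdist V E u v = (INF xs \<in> {xs. walk V E xs \<and> hd xs = u \<and> last xs = v}. enat (length xs - 1))"

definition induced_edges :: "('v \<times> 'v) set \<Rightarrow> 'v set \<Rightarrow> ('v \<times> 'v) set" where
  "induced_edges E S = E \<inter> (S \<times> S)"

definition isometric_subgraph ::
  "'v set \<Rightarrow> ('v \<times> 'v) set \<Rightarrow> 'v set \<Rightarrow> ('v \<times> 'v) set \<Rightarrow> bool" where
  "isometric_subgraph VH EH VG EG \<longleftrightarrow> VH \<subseteq> VG \<and> EH \<subseteq> EG \<and>
     (\<forall>u\<in>VH. \<forall>v\<in>VH. gdist VH EH u v = gdist VG EG u v)"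

definition shortest_paths :: "'v set \<Rightarrow> ('v \<times> 'v) set \<Rightarrow> 'v \<Rightarrow> 'v \<Rightarrow> 'v list set" where
  "shortest_paths V E u v =
     {xs. gpath V E xs \<and> hd xs = u \<and> last xs = v \<and> enat (length xs - 1) = gdist V E u v}"

text \<open>Copy i (i = 1, 2) of the perfect binary tree of depth r has vertices (i, w) with w a
  binary word of length at most r (w = path from the root); the children of (i, w) are
  (i, w@[b]). Gluing identifies the leaves (1, w) and (2, w) (length w = r), the fixed
  isomorphism being the identity on words; the glued leaf is represented as (0, w).\<close>

definition glue :: "nat \<Rightarrow> nat \<times> bool list \<Rightarrow> nat \<times> bool list" where
  "glue r x = (if length (snd x) = r then (0, snd x) else x)"

definition tree_verts :: "nat \<Rightarrow> nat \<Rightarrow> (nat \<times> bool list) set" where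
  "tree_verts r i = {(i, w) | w. length w \<le> r}"

definition tree_edges :: "nat \<Rightarrow> nat \<Rightarrow> ((nat \<times> bool list) \<times> (nat \<times> bool list)) set" where
  "tree_edges r i = {((i, w), (i, w @ [b])) | w b. length w < r}"

definition GT_copy :: "nat \<Rightarrow> nat \<Rightarrow> (nat \<times> bool list) set" where
  "GT_copy r i = glue r ` tree_verts r i"

definition GT_verts :: "nat \<Rightarrow> (nat \<times> bool list) set" where
  "GT_verts r = GT_copy r 1 \<union> GT_copy r 2"

definition GT_edges :: "nat \<Rightarrow> ((nat \<times> bool list) \<times> (nat \<times> bool list)) set" where
  "GT_edges r = (\<lambda>(x, y). (glue r x, glue r y)) ` (tree_edges r 1 \<union> tree_edges r 2)"

definition quasi_leaves :: "nat \<Rightarrow> (nat \<times> bool list) set" where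
  "quasi_leaves r = GT_copy r 1 \<inter> GT_copy r 2"

end

(*
  Forgetting the copy index, every edge of GT(r) joins a word w to w @ [c], so the projection
  snd maps GT(r) homomorphically onto the tree of words. There the distance from a to b is
  |a| + |b| - 2 |lcp a b|, and the geodesic is unique because every word other than b has exactly
  one neighbour closer to b. Hence no walk in GT(r) is shorter than the word distance of its ends,
  and a walk of exactly that length projects onto the word geodesic. Lifting the geodesic into a
  copy containing both ends attains the bound, which gives isometry. A shortest walk can change
  copy only at a quasi-leaf, and the interior words of a geodesic between words of length at most r
  are shorter than r; so every shortest path is the lift of the word geodesic into a copy containing
  both ends. Both copies qualify exactly when both ends are quasi-leaves, and then the two lifts
  differ at their second vertex.
*)
theory Submission
  imports Defs "HOL-Library.Sublist"
begin

lemma walk_singleton [simp]: "walk V E [x] \<longleftrightarrow> x \<in> V"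
  by (simp add: walk_def)

lemma walk_Cons_Cons: "walk V E (x # y # zs) \<longleftrightarrow> x \<in> V \<and> adj E x y \<and> walk V E (y # zs)"
  by (auto simp: walk_def nth_Cons less_Suc_eq_0_disj split: nat.splits)

lemma walk_mono: "V \<subseteq> V' \<Longrightarrow> E \<subseteq> E' \<Longrightarrow> walk V E xs \<Longrightarrow> walk V' E' xs"
  unfolding walk_def adj_def by blast

lemma induced_edges_subset: "induced_edges E S \<subseteq> E"
  by (simp add: induced_edges_def)

lemma gdist_eqI:
  assumes "walk V E xs" and "hd xs = u" and "last xs = v" and "length xs = Suc n"
    and "\<And>ys. walk V E ys \<Longrightarrow> hd ys = u \<Longrightarrow> last ys = v \<Longrightarrow> Suc n \<le> length ys"
  shows "gdist V E u v = enat n"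
  unfolding gdist_def
proof (rule antisym)
  show "(INF ys \<in> {ys. walk V E ys \<and> hd ys = u \<and> last ys = v}. enat (length ys - 1)) \<le> enat n"
    using assms(1-4) by (intro INF_lower2[of xs]) auto
  show "enat n \<le> (INF ys \<in> {ys. walk V E ys \<and> hd ys = u \<and> last ys = v}. enat (length ys - 1))"
  proof (rule INF_greatest)
    fix ys assume "ys \<in> {ys. walk V E ys \<and> hd ys = u \<and> last ys = v}"
    then have "Suc n \<le> length ys" using assms(5) by blast
    then show "enat n \<le> enat (length ys - 1)" by simp
  qed
qed

section \<open>The tree of words\<close>

definition tree_dist :: "'a list \<Rightarrow> 'a list \<Rightarrow> nat" where
  "tree_dist a b = length a + length b - 2 * length (longest_common_prefix a b)"

definition tree_adj :: "'a list \<Rightarrow> 'a list \<Rightarrow> bool" where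
  "tree_adj x y \<longleftrightarrow> (\<exists>c. y = x @ [c]) \<or> (\<exists>c. x = y @ [c])"

definition toward :: "'a list \<Rightarrow> 'a list \<Rightarrow> 'a list" where
  "toward b x = (if prefix x b then take (Suc (length x)) b else butlast x)"

lemma longest_common_prefix_prefix: "prefix xs ys \<Longrightarrow> longest_common_prefix xs ys = xs"
  by (rule prefix_order.antisym[OF longest_common_prefix_prefix1
        longest_common_prefix_max_prefix[OF prefix_order.refl]])

lemma longest_common_prefix_snoc_not_prefix:
  "\<not> prefix (xs @ [c]) ys \<Longrightarrow> longest_common_prefix (xs @ [c]) ys = longest_common_prefix xs ys"
proof (induction xs arbitrary: ys)
  case Nil
  then show ?case by (cases ys) auto
next
  case (Cons x xs)
  then show ?case by (cases ys) auto
qed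

lemma tree_dist_self [simp]: "tree_dist a a = 0"
  by (simp add: tree_dist_def longest_common_prefix_prefix)

lemma tree_dist_snoc_prefix:
  "prefix (x @ [c]) b \<Longrightarrow> tree_dist x b = Suc (tree_dist (x @ [c]) b)"
  using prefix_length_le[of "x @ [c]" b]
  by (simp add: tree_dist_def longest_common_prefix_prefix prefix_order.dual_order.trans)

lemma tree_dist_snoc_not_prefix:
  "\<not> prefix (x @ [c]) b \<Longrightarrow> tree_dist (x @ [c]) b = Suc (tree_dist x b)"
  using prefix_length_le[OF longest_common_prefix_prefix1, of x b]
    prefix_length_le[OF longest_common_prefix_prefix2, of x b]
  by (simp add: tree_dist_def longest_common_prefix_snoc_not_prefix)

lemma tree_dist_adj_le: "tree_adj x y \<Longrightarrow> tree_dist x b \<le> Suc (tree_dist y b)"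
  unfolding tree_adj_def
  by (metis le_SucI nat_le_linear not_less_eq_eq tree_dist_snoc_not_prefix tree_dist_snoc_prefix)

lemma toward_step:
  assumes "x \<noteq> b"
  shows "tree_adj x (toward b x)" and "Suc (tree_dist (toward b x) b) = tree_dist x b"
proof -
  have "tree_adj x (toward b x) \<and> Suc (tree_dist (toward b x) b) = tree_dist x b"
  proof (cases "prefix x b")
    case True
    then have "length x < length b"
      using True assms by (simp add: prefix_length_less strict_prefix_def)
    then have "take (Suc (length x)) b = x @ [b ! length x]"
      using True by (metis prefix_def append_eq_conv_conj take_Suc_conv_app_nth)
    moreover have "prefix (take (Suc (length x)) b) b" by (rule take_is_prefix)
    ultimately show ?thesis
      using True tree_dist_snoc_prefix[of x "b ! length x" b] by (simp add: toward_def tree_adj_def)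
  next
    case False
    then have "x = butlast x @ [last x]" by (metis Nil_prefix append_butlast_last_id)
    then show ?thesis
      using False tree_dist_snoc_not_prefix[of "butlast x" "last x" b]
      by (simp add: toward_def tree_adj_def) metis
  qed
  then show "tree_adj x (toward b x)" "Suc (tree_dist (toward b x) b) = tree_dist x b" by auto
qed

lemma toward_unique:
  assumes "tree_adj x y" and "Suc (tree_dist y b) = tree_dist x b"
  shows "y = toward b x"
  using assms(1) unfolding tree_adj_def
proof (elim disjE exE)
  fix c assume y: "y = x @ [c]"
  then have "prefix y b" using assms(2) tree_dist_snoc_not_prefix by fastforce
  then show "y = toward b x"
    using y by (auto simp: toward_def prefix_def)
next
  fix c assume x: "x = y @ [c]"
  then have "\<not> prefix x b" using assms(2) tree_dist_snoc_prefix by fastforce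
  then show "y = toward b x" using x by (simp add: toward_def)
qed

lemma toward_eq_or_shorter:
  assumes "x \<noteq> b"
  shows "toward b x = b \<or> length (toward b x) < max (length x) (length b)"
proof (cases "prefix x b")
  case True
  then show ?thesis by (auto simp: toward_def min_def)
next
  case False
  then have "x \<noteq> []" by auto
  then show ?thesis using False by (simp add: toward_def less_max_iff_disj)
qed

function tree_geodesic :: "'a list \<Rightarrow> 'a list \<Rightarrow> 'a list list" where
  "tree_geodesic a b = (if a = b then [a] else a # tree_geodesic (toward b a) b)"
  by auto
termination
proof (relation "measure (\<lambda>(a, b). tree_dist a b)")
  show "((toward b a, b), a, b) \<in> measure (\<lambda>(a, b). tree_dist a b)" if "a \<noteq> b" for a b :: "'a list"
    using toward_step(2)[OF that] by simp
qed simp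

declare tree_geodesic.simps [simp del]

lemma tree_geodesic_same [simp]: "tree_geodesic a a = [a]"
  by (simp add: tree_geodesic.simps)

lemma tree_geodesic_step: "a \<noteq> b \<Longrightarrow> tree_geodesic a b = a # tree_geodesic (toward b a) b"
  by (simp add: tree_geodesic.simps)

lemma tree_geodesic_not_Nil [simp]: "tree_geodesic a b \<noteq> []"
  by (simp add: tree_geodesic.simps)

lemma length_tree_geodesic: "length (tree_geodesic a b) = Suc (tree_dist a b)"
proof (induction a b rule: tree_geodesic.induct)
  case (1 a b)
  then show ?case
    by (cases "a = b") (simp_all add: tree_geodesic_step toward_step(2))
qed

lemma hd_tree_geodesic [simp]: "hd (tree_geodesic a b) = a"
  by (cases "a = b") (simp_all add: tree_geodesic_step)

lemma last_tree_geodesic [simp]: "last (tree_geodesic a b) = b"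
proof (induction a b rule: tree_geodesic.induct)
  case (1 a b)
  then show ?case
    by (cases "a = b") (simp_all add: tree_geodesic_step)
qed

lemma tree_dist_le_on_tree_geodesic:
  "w \<in> set (tree_geodesic a b) \<Longrightarrow> tree_dist w b \<le> tree_dist a b"
proof (induction a b rule: tree_geodesic.induct)
  case (1 a b)
  then show ?case
    using toward_step(2)[of a b] by (cases "a = b") (auto simp: tree_geodesic_step)
qed

lemma distinct_tree_geodesic: "distinct (tree_geodesic a b)"
proof (induction a b rule: tree_geodesic.induct)
  case (1 a b)
  then show ?case
    using toward_step(2)[of a b] tree_dist_le_on_tree_geodesic[of a "toward b a" b]
    by (cases "a = b") (auto simp: tree_geodesic_step)
qed

lemma tree_geodesic_inner_shorter:
  "w \<in> set (tree_geodesic a b) \<Longrightarrow> w = a \<or> w = b \<or> length w < max (length a) (length b)"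
proof (induction a b rule: tree_geodesic.induct)
  case (1 a b)
  show ?case
  proof (cases "a = b \<or> w = a")
    case False
    then have "w \<in> set (tree_geodesic (toward b a) b)"
      using "1.prems" by (simp add: tree_geodesic_step)
    then show ?thesis using "1.IH" False toward_eq_or_shorter[of a b] by fastforce
  qed (use "1.prems" in auto)
qed

lemma walk_map_tree_geodesic:
  assumes "length a \<le> n" and "length b \<le> n"
    and "\<And>w. length w \<le> n \<Longrightarrow> f w \<in> V"
    and "\<And>v w. tree_adj v w \<Longrightarrow> length v \<le> n \<Longrightarrow> length w \<le> n \<Longrightarrow> adj E (f v) (f w)"
  shows "walk V E (map f (tree_geodesic a b))"
  using assms(1,2)
proof (induction a b rule: tree_geodesic.induct)
  case (1 a b)
  show ?case
  proof (cases "a = b")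
    case True
    then show ?thesis using "1.prems" assms(3) by simp
  next
    case False
    have "length (toward b a) \<le> n"
      using toward_eq_or_shorter[OF False] "1.prems" by (auto simp: less_max_iff_disj)
    then show ?thesis
      using "1.IH"[OF False] "1.prems" assms(3,4) toward_step(1)[OF False]
      by (cases "toward b a = b") (simp_all add: tree_geodesic_step False walk_Cons_Cons)
  qed
qed

lemma walk_tree_dist_less:
  assumes "walk V E xs" and "\<And>x y. adj E x y \<Longrightarrow> tree_adj (h x) (h y)"
  shows "tree_dist (h (hd xs)) (h (last xs)) < length xs"
  using assms(1)
proof (induction xs rule: induct_list012)
  case (3 x y zs)
  have "walk V E (y # zs)" and "tree_adj (h x) (h y)"
    using "3.prems" assms(2) by (auto simp: walk_Cons_Cons)
  then show ?case
    using "3.IH"(2) tree_dist_adj_le[of "h x" "h y" "h (last (y # zs))"] by simp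
qed (auto simp: walk_def)

lemma walk_tight_eq_tree_geodesic:
  assumes "walk V E xs" and "\<And>x y. adj E x y \<Longrightarrow> tree_adj (h x) (h y)"
    and "length xs = Suc (tree_dist (h (hd xs)) (h (last xs)))"
  shows "map h xs = tree_geodesic (h (hd xs)) (h (last xs))"
  using assms(1,3)
proof (induction xs rule: induct_list012)
  case (3 x y zs)
  define b where "b = h (last (y # zs))"
  have walk: "walk V E (y # zs)" and xy: "tree_adj (h x) (h y)"
    using "3.prems"(1) assms(2) by (auto simp: walk_Cons_Cons)
  have "tree_dist (h y) b < length (y # zs)"
    using walk_tree_dist_less[of V E "y # zs" h, OF walk assms(2)] unfolding b_def by simp
  moreover have "tree_dist (h x) b \<le> Suc (tree_dist (h y) b)"
    using tree_dist_adj_le[OF xy] .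
  moreover have dist_x: "tree_dist (h x) b = length (y # zs)"
    using "3.prems"(2) unfolding b_def by simp
  ultimately have tight: "Suc (tree_dist (h y) b) = tree_dist (h x) b"
    by linarith
  have "length (y # zs) = Suc (tree_dist (h y) b)"
    using tight dist_x by linarith
  then have "map h (y # zs) = tree_geodesic (h y) b"
    using "3.IH"(2)[OF walk] unfolding b_def by simp
  moreover have "h x \<noteq> b"
    using tight tree_dist_self[of b] by auto
  ultimately show ?case
    using toward_unique[OF xy tight] tree_geodesic_step[of "h x" b] unfolding b_def by simp
qed (auto simp: walk_def)

lemma snd_glue [simp]: "snd (glue r x) = snd x"
  by (simp add: glue_def)

lemma glue_short: "length w < r \<Longrightarrow> glue r (c, w) = (c, w)"
  by (simp add: glue_def)

lemma mem_GT_copy_iff: "x \<in> GT_copy r c \<longleftrightarrow> length (snd x) \<le> r \<and> glue r (c, snd x) = x"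
  unfolding GT_copy_def tree_verts_def by force

lemma GT_copy_subset_GT_verts: "c \<in> {1, 2} \<Longrightarrow> GT_copy r c \<subseteq> GT_verts r"
  by (auto simp: GT_verts_def)

lemma GT_edge_within_copy:
  assumes "adj (GT_edges r) x y"
  shows "\<exists>c\<in>{1, 2}. x \<in> GT_copy r c \<and> y \<in> GT_copy r c \<and> tree_adj (snd x) (snd y)"
proof -
  obtain c w d where c: "c \<in> {1, 2}" and w: "length w < r"
    and xy: "{x, y} = {glue r (c, w), glue r (c, w @ [d])}"
    using assms unfolding adj_def GT_edges_def tree_edges_def by fast
  have "glue r (c, w) \<in> GT_copy r c" "glue r (c, w @ [d]) \<in> GT_copy r c"
    using w by (simp_all add: mem_GT_copy_iff)
  moreover have "tree_adj w (w @ [d])" "tree_adj (w @ [d]) w"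
    by (simp_all add: tree_adj_def)
  ultimately show ?thesis
    using c xy by (auto simp: doubleton_eq_iff)
qed

lemma adj_GT_edges_tree_adj: "adj (GT_edges r) x y \<Longrightarrow> tree_adj (snd x) (snd y)"
  using GT_edge_within_copy by blast

lemma adj_glue_induced:
  assumes "c \<in> {1, 2}" and "tree_adj v w" and "length v \<le> r" and "length w \<le> r"
  shows "adj (induced_edges (GT_edges r) (GT_copy r c)) (glue r (c, v)) (glue r (c, w))"
proof -
  have edge: "(glue r (c, x), glue r (c, x @ [d])) \<in> GT_edges r" if "length x < r" for x d
    using that assms(1) unfolding GT_edges_def tree_edges_def by force
  have "glue r (c, v) \<in> GT_copy r c" "glue r (c, w) \<in> GT_copy r c"
    using assms(3,4) by (simp_all add: mem_GT_copy_iff)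
  then show ?thesis
    using assms(2-4) edge unfolding adj_def induced_edges_def tree_adj_def by auto
qed

lemma quasi_leaf_length:
  assumes "x \<in> quasi_leaves r"
  shows "length (snd x) = r"
proof (rule ccontr)
  assume "length (snd x) \<noteq> r"
  moreover have "length (snd x) \<le> r" "glue r (1, snd x) = glue r (2, snd x)"
    using assms by (auto simp: quasi_leaves_def mem_GT_copy_iff)
  ultimately show False by (simp add: glue_short)
qed

lemma walk_within_copy:
  assumes "walk (GT_verts r) (GT_edges r) xs" and "distinct xs"
    and "\<forall>x\<in>set xs. x \<in> quasi_leaves r \<longrightarrow> x = hd xs \<or> x = last xs"
  shows "\<exists>c\<in>{1, 2}. set xs \<subseteq> GT_copy r c"
  using assms
proof (induction xs rule: induct_list012)
  case (2 x)
  then show ?case by (auto simp: GT_verts_def)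
next
  case (3 x y zs)
  have walk: "walk (GT_verts r) (GT_edges r) (y # zs)" and xy: "adj (GT_edges r) x y"
    using "3.prems"(1) by (simp_all add: walk_Cons_Cons)
  have "\<forall>z\<in>set (y # zs). z \<in> quasi_leaves r \<longrightarrow> z = hd (y # zs) \<or> z = last (y # zs)"
    using "3.prems"(2,3) by auto
  then obtain c where c: "c \<in> {1, 2}" "set (y # zs) \<subseteq> GT_copy r c"
    using "3.IH"(2) walk "3.prems"(2) by auto
  obtain c' where c': "c' \<in> {1, 2}" "x \<in> GT_copy r c'" "y \<in> GT_copy r c'"
    using GT_edge_within_copy[OF xy] by blast
  show ?case
  proof (cases "c' = c")
    case True
    then show ?thesis using c c' by auto
  next
    case False
    then have "y \<in> quasi_leaves r"
      using c c' by (auto simp: quasi_leaves_def)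
    then have "y = last (y # zs)" using "3.prems"(2,3) by auto
    then have "zs = []" using "3.prems"(2) by (metis distinct.simps(2) last_ConsR last_in_set)
    then show ?thesis using c' by auto
  qed
qed (simp add: walk_def)

section \<open>Distances and shortest paths in the glued binary tree\<close>

definition copy_geodesic :: "nat \<Rightarrow> nat \<Rightarrow> bool list \<Rightarrow> bool list \<Rightarrow> (nat \<times> bool list) list" where
  "copy_geodesic r c a b = map (\<lambda>w. glue r (c, w)) (tree_geodesic a b)"

lemma copy_geodesic_simps:
  "hd (copy_geodesic r c a b) = glue r (c, a)"
  "last (copy_geodesic r c a b) = glue r (c, b)"
  "length (copy_geodesic r c a b) = Suc (tree_dist a b)"
  by (simp_all add: copy_geodesic_def hd_map last_map length_tree_geodesic)

lemma gpath_copy_geodesic: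
  assumes "c \<in> {1, 2}" and "length a \<le> r" and "length b \<le> r"
  shows "gpath (GT_copy r c) (induced_edges (GT_edges r) (GT_copy r c)) (copy_geodesic r c a b)"
  unfolding gpath_def copy_geodesic_def
proof
  show "walk (GT_copy r c) (induced_edges (GT_edges r) (GT_copy r c))
      (map (\<lambda>w. glue r (c, w)) (tree_geodesic a b))"
    using assms by (intro walk_map_tree_geodesic adj_glue_induced) (simp_all add: mem_GT_copy_iff)
  have "inj_on (\<lambda>w. glue r (c, w)) (set (tree_geodesic a b))"
    by (rule inj_on_inverseI[of _ snd]) simp
  then show "distinct (map (\<lambda>w. glue r (c, w)) (tree_geodesic a b))"
    by (simp add: distinct_map distinct_tree_geodesic)
qed

lemma
  assumes "c \<in> {1, 2}" and "u \<in> GT_copy r c" and "v \<in> GT_copy r c"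
  shows gdist_GT_verts: "gdist (GT_verts r) (GT_edges r) u v = enat (tree_dist (snd u) (snd v))"
    and gdist_GT_copy:
      "gdist (GT_copy r c) (induced_edges (GT_edges r) (GT_copy r c)) u v = enat (tree_dist (snd u) (snd v))"
proof -
  let ?P = "copy_geodesic r c (snd u) (snd v)"
  have P: "walk (GT_copy r c) (induced_edges (GT_edges r) (GT_copy r c)) ?P" "hd ?P = u" "last ?P = v"
    using gpath_copy_geodesic[OF assms(1)] assms(2,3)
    by (simp_all add: gpath_def copy_geodesic_simps mem_GT_copy_iff)
  have lower: "Suc (tree_dist (snd u) (snd v)) \<le> length ys"
    if "walk (GT_verts r) (GT_edges r) ys" "hd ys = u" "last ys = v" for ys
    using walk_tree_dist_less[of _ _ ys snd, OF that(1) adj_GT_edges_tree_adj[of r]] that(2,3) by simp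
  have mono: "walk (GT_copy r c) (induced_edges (GT_edges r) (GT_copy r c)) ys \<Longrightarrow>
      walk (GT_verts r) (GT_edges r) ys" for ys
    by (rule walk_mono[OF GT_copy_subset_GT_verts[OF assms(1)] induced_edges_subset])
  show "gdist (GT_verts r) (GT_edges r) u v = enat (tree_dist (snd u) (snd v))"
    using P lower mono by (intro gdist_eqI[of _ _ ?P]) (simp_all add: copy_geodesic_simps)
  show "gdist (GT_copy r c) (induced_edges (GT_edges r) (GT_copy r c)) u v =
      enat (tree_dist (snd u) (snd v))"
    using P lower mono by (intro gdist_eqI[of _ _ ?P]) (simp_all add: copy_geodesic_simps)
qed

lemma tight_walk_GT_eq_copy_geodesic:
  assumes "u \<in> GT_copy r i" and "v \<in> GT_copy r i"
    and walk: "walk (GT_verts r) (GT_edges r) xs" and "distinct xs"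
    and ends: "hd xs = u" "last xs = v" and len: "length xs = Suc (tree_dist (snd u) (snd v))"
  shows "\<exists>c\<in>{1, 2}. u \<in> GT_copy r c \<and> v \<in> GT_copy r c \<and> xs = copy_geodesic r c (snd u) (snd v)"
proof -
  have ne: "xs \<noteq> []" using walk by (simp add: walk_def)
  have geo: "map snd xs = tree_geodesic (snd u) (snd v)"
    using walk_tight_eq_tree_geodesic[of _ _ xs snd, OF walk adj_GT_edges_tree_adj[of r]] ends len
    by simp
  have "x = hd xs \<or> x = last xs" if "x \<in> set xs" "x \<in> quasi_leaves r" for x
  proof -
    \<comment> \<open>quasi-leaves have words of length r, which the word geodesic only has at its ends\<close>
    have "snd x \<in> set (tree_geodesic (snd u) (snd v))"
      using that(1) geo by (metis image_eqI list.set_map)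
    moreover have "length (snd u) \<le> r" "length (snd v) \<le> r"
      using assms(1,2) by (simp_all add: mem_GT_copy_iff)
    ultimately have "snd x = snd (hd xs) \<or> snd x = snd (last xs)"
      using tree_geodesic_inner_shorter quasi_leaf_length[OF that(2)] ends by fastforce
    moreover have "inj_on snd (set xs)"
      using geo distinct_tree_geodesic by (metis distinct_map)
    ultimately show ?thesis
      using that(1) ne by (auto dest: inj_onD)
  qed
  then obtain c where c: "c \<in> {1, 2}" "set xs \<subseteq> GT_copy r c"
    using walk_within_copy[OF walk \<open>distinct xs\<close>] by blast
  have "copy_geodesic r c (snd u) (snd v) = map (\<lambda>x. glue r (c, snd x)) xs"
    by (simp add: copy_geodesic_def o_def flip: geo)
  also have "\<dots> = xs"
    using c(2) by (intro map_idI) (auto simp: mem_GT_copy_iff)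
  finally have "xs = copy_geodesic r c (snd u) (snd v)" ..
  moreover have "u \<in> GT_copy r c" "v \<in> GT_copy r c"
    using c ends ne by auto
  ultimately show ?thesis using c(1) by blast
qed

lemma shortest_paths_GT:
  assumes "i \<in> {1, 2}" and "u \<in> GT_copy r i" and "v \<in> GT_copy r i"
  shows "shortest_paths (GT_verts r) (GT_edges r) u v =
    (\<lambda>c. copy_geodesic r c (snd u) (snd v)) ` {c \<in> {1, 2}. u \<in> GT_copy r c \<and> v \<in> GT_copy r c}"
    (is "?S = ?G ` ?C")
proof
  show "?S \<subseteq> ?G ` ?C"
  proof
    fix xs assume "xs \<in> ?S"
    then have walk: "walk (GT_verts r) (GT_edges r) xs" and path: "distinct xs" "hd xs = u" "last xs = v"
      and "length xs - 1 = tree_dist (snd u) (snd v)"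
      using gdist_GT_verts[OF assms] by (auto simp: shortest_paths_def gpath_def)
    then have "length xs = Suc (tree_dist (snd u) (snd v))"
      by (cases xs) (simp_all add: walk_def)
    then show "xs \<in> ?G ` ?C"
      using tight_walk_GT_eq_copy_geodesic[OF assms(2,3) walk path] by blast
  qed
  show "?G ` ?C \<subseteq> ?S"
  proof clarify
    fix c assume c: "c \<in> {1, 2}" "u \<in> GT_copy r c" "v \<in> GT_copy r c"
    have "gpath (GT_verts r) (GT_edges r) (?G c)"
      using gpath_copy_geodesic[OF c(1), of "snd u" r "snd v"] c(2,3)
        walk_mono[OF GT_copy_subset_GT_verts[OF c(1), of r] induced_edges_subset]
      by (auto simp: gpath_def mem_GT_copy_iff)
    then show "?G c \<in> ?S"
      using c(2,3) gdist_GT_verts[OF assms]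
      by (simp add: shortest_paths_def copy_geodesic_simps mem_GT_copy_iff)
  qed
qed

lemma tree_adj_length_neq: "tree_adj x y \<Longrightarrow> length x \<noteq> length y"
  by (auto simp: tree_adj_def)

lemma copy_geodesics_differ:
  assumes "a \<noteq> b" and "length a = r" and "length b = r"
  shows "copy_geodesic r 1 a b \<noteq> copy_geodesic r 2 a b"
proof -
  let ?a' = "toward b a"
  have "?a' \<noteq> b"
    using tree_adj_length_neq[OF toward_step(1)[OF assms(1)]] assms(2,3) by auto
  then have "length ?a' < r"
    using toward_eq_or_shorter[OF assms(1)] assms(2,3) by simp
  moreover have "copy_geodesic r c a b ! 1 = glue r (c, ?a')" for c
    using \<open>?a' \<noteq> b\<close> by (simp add: copy_geodesic_def tree_geodesic_step[OF assms(1)] tree_geodesic_step)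
  ultimately have "copy_geodesic r 1 a b ! 1 \<noteq> copy_geodesic r 2 a b ! 1"
    by (simp add: glue_short)
  then show ?thesis by metis
qed

lemma card_shortest_paths_GT:
  assumes "i \<in> {1, 2}" and "u \<in> GT_copy r i" and "v \<in> GT_copy r i"
  shows "card (shortest_paths (GT_verts r) (GT_edges r) u v) =
    (if u \<noteq> v \<and> u \<in> quasi_leaves r \<and> v \<in> quasi_leaves r then 2 else 1)"
proof -
  define C where "C = {c \<in> {1, 2}. u \<in> GT_copy r c \<and> v \<in> GT_copy r c}"
  have paths: "shortest_paths (GT_verts r) (GT_edges r) u v = (\<lambda>c. copy_geodesic r c (snd u) (snd v)) ` C"
    using shortest_paths_GT[OF assms] by (simp add: C_def)
  have "i \<in> C" using assms by (simp add: C_def)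
  consider "u = v" | "u \<noteq> v" "u \<in> quasi_leaves r" "v \<in> quasi_leaves r"
    | "\<not> (u \<in> quasi_leaves r \<and> v \<in> quasi_leaves r)"
    by blast
  then show ?thesis
  proof cases
    case 1
    have "copy_geodesic r c (snd u) (snd v) = [u]" if "c \<in> C" for c
    proof -
      have "glue r (c, snd u) = u" using that by (simp add: C_def mem_GT_copy_iff)
      then show ?thesis using 1 by (simp add: copy_geodesic_def)
    qed
    then have "shortest_paths (GT_verts r) (GT_edges r) u v = {[u]}"
      unfolding paths using \<open>i \<in> C\<close> by force
    then show ?thesis using 1 by simp
  next
    case 2
    then have "C = {1, 2}" by (auto simp: C_def quasi_leaves_def)
    have "u = glue r (i, snd u)" "v = glue r (i, snd v)"
      using assms(2,3) by (simp_all add: mem_GT_copy_iff)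
    then have "snd u \<noteq> snd v" using 2(1) by metis
    then have "copy_geodesic r 1 (snd u) (snd v) \<noteq> copy_geodesic r 2 (snd u) (snd v)"
      using quasi_leaf_length 2(2,3) by (intro copy_geodesics_differ) simp_all
    then show ?thesis using paths \<open>C = {1, 2}\<close> 2 by simp
  next
    case 3
    have "c = i" if "c \<in> C" for c
    proof (rule ccontr)
      assume "c \<noteq> i"
      then have "u \<in> GT_copy r 1 \<inter> GT_copy r 2 \<and> v \<in> GT_copy r 1 \<inter> GT_copy r 2"
        using that assms unfolding C_def by fastforce
      then show False using 3 by (simp add: quasi_leaves_def)
    qed
    then have "C = {i}" using \<open>i \<in> C\<close> by blast
    then show ?thesis using paths 3 by simp
  qed
qed

theorem mainTheorem1:
  fixes r i :: nat
  assumes "r \<ge> 2" and "i \<in> {1, 2}"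
  shows "isometric_subgraph (GT_copy r i) (induced_edges (GT_edges r) (GT_copy r i))
           (GT_verts r) (GT_edges r)
         \<and> (\<forall>u \<in> GT_copy r i. \<forall>v \<in> GT_copy r i.
              card (shortest_paths (GT_verts r) (GT_edges r) u v) =
                (if u \<noteq> v \<and> u \<in> quasi_leaves r \<and> v \<in> quasi_leaves r then 2 else 1))"
proof (intro conjI ballI)
  show "isometric_subgraph (GT_copy r i) (induced_edges (GT_edges r) (GT_copy r i))
      (GT_verts r) (GT_edges r)"
    using GT_copy_subset_GT_verts[OF assms(2)] induced_edges_subset
      gdist_GT_verts[OF assms(2)] gdist_GT_copy[OF assms(2)]
    by (simp add: isometric_subgraph_def)
  fix u v assume "u \<in> GT_copy r i" and "v \<in> GT_copy r i"
  then show "card (shortest_paths (GT_verts r) (GT_edges r) u v) =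
      (if u \<noteq> v \<and> u \<in> quasi_leaves r \<and> v \<in> quasi_leaves r then 2 else 1)"
    by (rule card_shortest_paths_GT[OF assms(2)])
qed

end
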